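(* Let $A$ be an eNTA. The language $\mathfrak L(A)$ is suffix-periodic: there exist $t_{per}>0$ and an integer $L>0$ with the following property. Suppose $$\lambda=(t_1,a_1),\dots,(t_{r-1},a_{r-1}),(t_r,a_r),(t_{r+1},a_{r+1}),\dots,(t_{r+m},a_{r+m})$$ is an observable timed trace in $\mathfrak L(A)$ with $t_r>t_{per}$, and let $K\in L\mathbb Z$ satisfy $t_r+K>t_{per}$. Then there exists an observable timed trace $\lambda'\in\mathfrak L(A)$ of the form $$\lambda'=(t_1',a_1'),\dots,(t_s',a_s'),(t_r+K,a_r),(t_{r+1}+K,a_{r+1}),\dots,(t_{r+m}+K,a_{r+m})$$ for some $s\ge0$, times $t_j'$ and actions $a_j'\in\Sigma$.
   Context: **Automata.** An eNTA (non-deterministic timed automaton with silent transitions) is a tuple $A=(\mathcal Q,q_0,\Sigma_\epsilon,\mathcal C,\mathcal T)$ with the following components. - $\mathcal Q$ is a finite set of locations and $q_0$ is the initial location. - $\Sigma$ is a finite set of observable actions, and $\Sigma_\epsilon=\Sigma\cup\{\epsilon\}$, where $\epsilon$ is silent. - $\mathcal C$ is a finite set of clocks. - $\mathcal T$ is a finite set of transitions $(q,a,g,\mathcal C_{rst},q')$ with $a\in\Sigma_\epsilon$, $\mathcal C_{rst}\subseteq\mathcal C$ the clocks reset, and guard $g$ a finite conjunction of constraints $c\sim n$, where $\sim\in\{<,\le,=,\ge,>\}$ and $n\in\mathbb N_0$. **Runs.** A run is a finite sequence $$(q_0,\mathbf 0)\xrightarrow{d_1}(q_0,d_1)\xrightarrow{\tau_1}(q_1,v_1)\xrightarrow{d_2}\cdots\xrightarrow{\tau_k}(q_k,v_k),$$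 where $d_i\ge0$, $\tau_i=(q_{i-1},a_i,g_i,\mathcal C_i,q_i)\in\mathcal T$, $v_0=\mathbf 0$, $v_{i-1}+d_i\models g_i$, and $v_i$ equals $v_{i-1}+d_i$ with the clocks of $\mathcal C_i$ set to $0$. **Traces and language.** The timed trace of a run is $(t_1,a_1),\dots,(t_k,a_k)$ with $t_i=d_1+\dots+d_i$. The observable timed trace is obtained by deleting all pairs with $a_i=\epsilon$. The language $\mathfrak L(A)$ is the set of observable timed traces of all runs of $A$ (all locations are accepting). *)

theory Defs
  imports Main "HOL-Library.Library"
begin

datatype cmp = CLt | CLe | CEq | CGe | CGt

type_synonym 'c constr = "'c \<times> cmp \<times> nat"
type_synonym 'c guard = "'c constr list"

text \<open>A transition (q, a, g, C_rst, q'); the action None stands for the silent action epsilon.\<close>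
type_synonym ('q,'a,'c) transition = "'q \<times> 'a option \<times> 'c guard \<times> 'c set \<times> 'q"

record ('q,'a,'c) enta =
  locs :: "'q set"
  init :: 'q
  sigma :: "'a set"
  clocks :: "'c set"
  trans :: "('q,'a,'c) transition set"

definition wf_enta :: "('q,'a,'c) enta \<Rightarrow> bool" where
  "wf_enta A \<longleftrightarrow> finite (locs A) \<and> init A \<in> locs A \<and> finite (sigma A) \<and>
     finite (clocks A) \<and> finite (trans A) \<and>
     (\<forall>(q,a,g,R,q') \<in> trans A. q \<in> locs A \<and> q' \<in> locs A \<and>
        (\<forall>b. a = Some b \<longrightarrow> b \<in> sigma A) \<and>
        (\<forall>(c,_,_) \<in> set g. c \<in> clocks A) \<and> R \<subseteq> clocks A)"

fun cmp_sat :: "cmp \<Rightarrow> real \<Rightarrow> real \<Rightarrow> bool" where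
  "cmp_sat CLt x n = (x < n)"
| "cmp_sat CLe x n = (x \<le> n)"
| "cmp_sat CEq x n = (x = n)"
| "cmp_sat CGe x n = (x \<ge> n)"
| "cmp_sat CGt x n = (x > n)"

definition guard_sat :: "('c \<Rightarrow> real) \<Rightarrow> 'c guard \<Rightarrow> bool" where
  "guard_sat v g \<longleftrightarrow> (\<forall>(c,r,n) \<in> set g. cmp_sat r (v c) (real n))"

definition reset :: "('c \<Rightarrow> real) \<Rightarrow> 'c set \<Rightarrow> ('c \<Rightarrow> real)" where
  "reset v R = (\<lambda>c. if c \<in> R then 0 else v c)"

text \<open>A run is a list of pairs (d_i, tau_i) of delays and transitions, starting in (q, v).\<close>
fun run_from :: "('q,'a,'c) enta \<Rightarrow> 'q \<Rightarrow> ('c \<Rightarrow> real) \<Rightarrow> (real \<times> ('q,'a,'c) transition) list \<Rightarrow> bool" where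
  "run_from A q v [] = True"
| "run_from A q v ((d, (p, a, g, R, p')) # rest) =
     (d \<ge> 0 \<and> (p, a, g, R, p') \<in> trans A \<and> p = q \<and>
      guard_sat (\<lambda>c. v c + d) g \<and>
      run_from A p' (reset (\<lambda>c. v c + d) R) rest)"

definition is_run :: "('q,'a,'c) enta \<Rightarrow> (real \<times> ('q,'a,'c) transition) list \<Rightarrow> bool" where
  "is_run A \<rho> \<longleftrightarrow> run_from A (init A) (\<lambda>_. 0) \<rho>"

fun timed_trace :: "real \<Rightarrow> (real \<times> ('q,'a,'c) transition) list \<Rightarrow> (real \<times> 'a option) list" where
  "timed_trace t [] = []"
| "timed_trace t ((d, (p, a, g, R, p')) # rest) = (t + d, a) # timed_trace (t + d) rest"

definition observable :: "(real \<times> 'a option) list \<Rightarrow> (real \<times> 'a) list" where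
  "observable tr = map (\<lambda>(t, a). (t, the a)) (filter (\<lambda>(t, a). a \<noteq> None) tr)"

definition lang :: "('q,'a,'c) enta \<Rightarrow> (real \<times> 'a) list set" where
  "lang A = {observable (timed_trace 0 \<rho>) | \<rho>. is_run A \<rho>}"

end

theory Submission
  imports Defs
begin

text \<open>
  Abstract a configuration reached at an integer time to its region: the location, the integer
  parts of the clocks below the largest guard constant, and the order and vanishing of their
  fractional parts. There are finitely many regions, and the set of regions reachable at time
  n + 1 is determined by the set reachable at time n, so these sets are eventually periodic.
  Regions are fine enough for this because of time warps: a strictly increasing f with
  f (x + 1) = f x + 1 maps runs to runs (guards compare differences of times with integers), and
  two valuations in the same region are related by such a warp, which moreover fixes integer
  times. So if the suffix of a trace starts after the integer time n, then at any time n' in the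
  same residue class modulo the period some configuration equivalent to the one at time n is
  reachable, and the suffix can be replayed from it, shifted by n' - n.
\<close>

fun run_end ::
  "'q \<Rightarrow> ('c \<Rightarrow> real) \<Rightarrow> (real \<times> ('q,'a,'c) transition) list \<Rightarrow> 'q \<times> ('c \<Rightarrow> real)"
where
  "run_end q v [] = (q, v)"
| "run_end q v ((d, (p, a, g, R, p')) # rest) = run_end p' (reset (\<lambda>c. v c + d) R) rest"

definition duration :: "(real \<times> ('q,'a,'c) transition) list \<Rightarrow> real" where
  "duration \<rho> = sum_list (map fst \<rho>)"

definition config_after ::
  "'q \<Rightarrow> ('c \<Rightarrow> real) \<Rightarrow> (real \<times> ('q,'a,'c) transition) list \<Rightarrow> real \<Rightarrow> 'q \<times> ('c \<Rightarrow> real)"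
where
  "config_after q v \<rho> e = (fst (run_end q v \<rho>), \<lambda>c. snd (run_end q v \<rho>) c + e)"

lemma duration_simps [simp]:
  "duration [] = 0" "duration (x # \<rho>) = fst x + duration \<rho>"
  "duration (\<rho> @ \<rho>') = duration \<rho> + duration \<rho>'"
  by (simp_all add: duration_def)

lemma run_from_append:
  "run_from A q v (\<rho> @ \<rho>') \<longleftrightarrow>
    run_from A q v \<rho> \<and> run_from A (fst (run_end q v \<rho>)) (snd (run_end q v \<rho>)) \<rho>'"
  by (induction A q v \<rho> rule: run_from.induct) auto

lemma run_end_append:
  "run_end q v (\<rho> @ \<rho>') = run_end (fst (run_end q v \<rho>)) (snd (run_end q v \<rho>)) \<rho>'"
  by (induction q v \<rho> rule: run_end.induct) auto

lemma timed_trace_append: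
  "timed_trace T (\<rho> @ \<rho>') = timed_trace T \<rho> @ timed_trace (T + duration \<rho>) \<rho>'"
  by (induction T \<rho> rule: timed_trace.induct) (auto simp: add.assoc)

lemma timed_trace_shift:
  "timed_trace (T + K) \<rho> = map (\<lambda>(t, a). (t + K, a)) (timed_trace T \<rho>)"
  by (induction T \<rho> rule: timed_trace.induct) (simp_all add: algebra_simps)

lemma observable_append: "observable (xs @ ys) = observable xs @ observable ys"
  by (simp add: observable_def)

lemma observable_shift:
  "observable (map (\<lambda>(t, a). (t + K, a)) xs) = map (\<lambda>(t, a). (t + K, a)) (observable xs)"
  by (induction xs) (auto simp: observable_def)

lemma run_from_duration_nonneg: "run_from A q v \<rho> \<Longrightarrow> duration \<rho> \<ge> 0"
  by (induction A q v \<rho> rule: run_from.induct) auto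

lemma timed_trace_le_end:
  "run_from A q v \<rho> \<Longrightarrow> x \<in> set (timed_trace T \<rho>) \<Longrightarrow> fst x \<le> T + duration \<rho>"
proof (induction A q v \<rho> arbitrary: T rule: run_from.induct)
  case (2 A q v d p a g R p' rest)
  then show ?case
    using run_from_duration_nonneg[of A p' _ rest] by (fastforce simp: add.assoc)
qed simp

lemma observable_timed_trace_le_end:
  "run_from A q v \<rho> \<Longrightarrow> x \<in> set (observable (timed_trace T \<rho>)) \<Longrightarrow>
    fst x \<le> T + duration \<rho>"
  by (auto simp: observable_def dest: timed_trace_le_end)

lemma run_from_split:
  assumes "run_from A q v \<rho>" "e \<ge> 0" "T \<le> s" "s \<le> T + duration \<rho> + e"
  obtains \<rho>\<^sub>1 e\<^sub>1 q\<^sub>1 v\<^sub>1 \<rho>\<^sub>2 e\<^sub>2 where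
    "run_from A q v \<rho>\<^sub>1" "e\<^sub>1 \<ge> 0" "T + duration \<rho>\<^sub>1 + e\<^sub>1 = s"
    "config_after q v \<rho>\<^sub>1 e\<^sub>1 = (q\<^sub>1, v\<^sub>1)"
    "run_from A q\<^sub>1 v\<^sub>1 \<rho>\<^sub>2" "e\<^sub>2 \<ge> 0" "s + duration \<rho>\<^sub>2 + e\<^sub>2 = T + duration \<rho> + e"
    "config_after q\<^sub>1 v\<^sub>1 \<rho>\<^sub>2 e\<^sub>2 = config_after q v \<rho> e"
    "timed_trace T \<rho> = timed_trace T \<rho>\<^sub>1 @ timed_trace s \<rho>\<^sub>2"
  using assms
proof (induction A q v \<rho> arbitrary: T thesis rule: run_from.induct)
  case (1 A q v)
  show ?case
    by (rule "1.prems"(1)[of "[]" "s - T" _ _ "[]" "T + e - s"])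
      (use "1.prems" in \<open>auto simp: config_after_def\<close>)
next
  case (2 A q v d p a g R p' rest)
  show ?case
  proof (cases "T + d \<le> s")
    case True
    show ?thesis
    proof (rule "2.IH")
      fix \<rho>\<^sub>1 e\<^sub>1 q\<^sub>1 v\<^sub>1 \<rho>\<^sub>2 e\<^sub>2
      assume "run_from A p' (reset (\<lambda>c. v c + d) R) \<rho>\<^sub>1" "0 \<le> e\<^sub>1"
        "T + d + duration \<rho>\<^sub>1 + e\<^sub>1 = s"
        "config_after p' (reset (\<lambda>c. v c + d) R) \<rho>\<^sub>1 e\<^sub>1 = (q\<^sub>1, v\<^sub>1)"
        "run_from A q\<^sub>1 v\<^sub>1 \<rho>\<^sub>2" "0 \<le> e\<^sub>2"
        "s + duration \<rho>\<^sub>2 + e\<^sub>2 = T + d + duration rest + e"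
        "config_after q\<^sub>1 v\<^sub>1 \<rho>\<^sub>2 e\<^sub>2 = config_after p' (reset (\<lambda>c. v c + d) R) rest e"
        "timed_trace (T + d) rest = timed_trace (T + d) \<rho>\<^sub>1 @ timed_trace s \<rho>\<^sub>2"
      then show thesis
        using "2.prems"
        by (intro "2.prems"(1)[of "(d, (p, a, g, R, p')) # \<rho>\<^sub>1" e\<^sub>1 q\<^sub>1 v\<^sub>1 \<rho>\<^sub>2 e\<^sub>2])
          (auto simp: config_after_def add.assoc)
    qed (use "2.prems" True in auto)
  next
    case False
    have "(\<lambda>c. v c + (s - T) + (T + d - s)) = (\<lambda>c. v c + d)"
      by (simp add: algebra_simps)
    then show ?thesis
      using "2.prems" False
      by (intro "2.prems"(1)[of "[]" "s - T" q "\<lambda>c. v c + (s - T)"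
            "(T + d - s, (p, a, g, R, p')) # rest" e])
        (auto simp: config_after_def)
  qed
qed

lemma run_from_join:
  assumes "run_from A q v \<rho>\<^sub>1" "e\<^sub>1 \<ge> 0" "config_after q v \<rho>\<^sub>1 e\<^sub>1 = (q\<^sub>1, v\<^sub>1)"
    "run_from A q\<^sub>1 v\<^sub>1 \<rho>\<^sub>2" "e\<^sub>2 \<ge> 0"
  obtains \<rho> e where "run_from A q v \<rho>" "e \<ge> 0"
    "duration \<rho> + e = duration \<rho>\<^sub>1 + e\<^sub>1 + duration \<rho>\<^sub>2 + e\<^sub>2"
    "config_after q v \<rho> e = config_after q\<^sub>1 v\<^sub>1 \<rho>\<^sub>2 e\<^sub>2"
    "timed_trace T \<rho> = timed_trace T \<rho>\<^sub>1 @ timed_trace (T + duration \<rho>\<^sub>1 + e\<^sub>1) \<rho>\<^sub>2"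
proof (cases \<rho>\<^sub>2)
  case Nil
  show ?thesis
    by (rule that[of \<rho>\<^sub>1 "e\<^sub>1 + e\<^sub>2"]) (use assms Nil in \<open>auto simp: config_after_def add.assoc\<close>)
next
  case (Cons x rest)
  obtain d p a g R p' where x: "x = (d, (p, a, g, R, p'))"
    by (cases x) auto
  have "(\<lambda>c. snd (run_end q v \<rho>\<^sub>1) c + (e\<^sub>1 + d)) =
      (\<lambda>c. snd (run_end q v \<rho>\<^sub>1) c + e\<^sub>1 + d)"
    by (simp add: algebra_simps)
  then show ?thesis
    using assms Cons x
    by (intro that[of "\<rho>\<^sub>1 @ (e\<^sub>1 + d, (p, a, g, R, p')) # rest" e\<^sub>2])
      (auto simp: config_after_def run_from_append run_end_append timed_trace_append
        algebra_simps)
qed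

definition reaches ::
  "('q,'a,'c) enta \<Rightarrow> 'q \<Rightarrow> ('c \<Rightarrow> real) \<Rightarrow> real \<Rightarrow> 'q \<Rightarrow> ('c \<Rightarrow> real) \<Rightarrow> bool"
where
  "reaches A q v t q' v' \<longleftrightarrow>
     (\<exists>\<rho> e. run_from A q v \<rho> \<and> e \<ge> 0 \<and> duration \<rho> + e = t \<and> config_after q v \<rho> e = (q', v'))"

abbreviation reachable_at :: "('q,'a,'c) enta \<Rightarrow> real \<Rightarrow> 'q \<Rightarrow> ('c \<Rightarrow> real) \<Rightarrow> bool" where
  "reachable_at A t q v \<equiv> reaches A (init A) (\<lambda>_. 0) t q v"

lemma reaches_trans:
  assumes "reaches A q v s q\<^sub>1 v\<^sub>1" "reaches A q\<^sub>1 v\<^sub>1 t q\<^sub>2 v\<^sub>2"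
  shows "reaches A q v (s + t) q\<^sub>2 v\<^sub>2"
proof -
  obtain \<rho>\<^sub>1 e\<^sub>1 \<rho>\<^sub>2 e\<^sub>2 where 1: "run_from A q v \<rho>\<^sub>1" "e\<^sub>1 \<ge> 0" "duration \<rho>\<^sub>1 + e\<^sub>1 = s"
    "config_after q v \<rho>\<^sub>1 e\<^sub>1 = (q\<^sub>1, v\<^sub>1)" and 2: "run_from A q\<^sub>1 v\<^sub>1 \<rho>\<^sub>2" "e\<^sub>2 \<ge> 0"
    "duration \<rho>\<^sub>2 + e\<^sub>2 = t" "config_after q\<^sub>1 v\<^sub>1 \<rho>\<^sub>2 e\<^sub>2 = (q\<^sub>2, v\<^sub>2)"
    using assms unfolding reaches_def by blast
  obtain \<rho> e where "run_from A q v \<rho>" "e \<ge> 0"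
    "duration \<rho> + e = duration \<rho>\<^sub>1 + e\<^sub>1 + duration \<rho>\<^sub>2 + e\<^sub>2"
    "config_after q v \<rho> e = config_after q\<^sub>1 v\<^sub>1 \<rho>\<^sub>2 e\<^sub>2"
    by (rule run_from_join[OF 1(1,2,4) 2(1,2)])
  with 1 2 show ?thesis
    unfolding reaches_def by (intro exI[of _ \<rho>] exI[of _ e]) auto
qed

lemma reaches_split:
  assumes "reaches A q v (s + t) q\<^sub>2 v\<^sub>2" "s \<ge> 0" "t \<ge> 0"
  obtains q\<^sub>1 v\<^sub>1 where "reaches A q v s q\<^sub>1 v\<^sub>1" "reaches A q\<^sub>1 v\<^sub>1 t q\<^sub>2 v\<^sub>2"
proof -
  obtain \<rho> e where \<rho>: "run_from A q v \<rho>" "e \<ge> 0" "duration \<rho> + e = s + t"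
    "config_after q v \<rho> e = (q\<^sub>2, v\<^sub>2)"
    using assms(1) unfolding reaches_def by blast
  have "0 \<le> s" "s \<le> 0 + duration \<rho> + e"
    using \<rho>(3) assms(2,3) by auto
  then show ?thesis
  proof (rule run_from_split[OF \<rho>(1,2)])
    fix \<rho>\<^sub>1 e\<^sub>1 q\<^sub>1 v\<^sub>1 \<rho>\<^sub>2 e\<^sub>2
    assume "run_from A q v \<rho>\<^sub>1" "e\<^sub>1 \<ge> 0" "0 + duration \<rho>\<^sub>1 + e\<^sub>1 = s"
      "config_after q v \<rho>\<^sub>1 e\<^sub>1 = (q\<^sub>1, v\<^sub>1)" "run_from A q\<^sub>1 v\<^sub>1 \<rho>\<^sub>2" "e\<^sub>2 \<ge> 0"
      "s + duration \<rho>\<^sub>2 + e\<^sub>2 = 0 + duration \<rho> + e"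
      "config_after q\<^sub>1 v\<^sub>1 \<rho>\<^sub>2 e\<^sub>2 = config_after q v \<rho> e"
    with \<rho>(3,4) have "reaches A q v s q\<^sub>1 v\<^sub>1" "reaches A q\<^sub>1 v\<^sub>1 t q\<^sub>2 v\<^sub>2"
      unfolding reaches_def by auto
    then show thesis
      by (rule that)
  qed
qed

section \<open>Clock equivalence above the largest constant\<close>

definition max_const :: "('q,'a,'c) enta \<Rightarrow> nat" where
  "max_const A = Max (insert 0 (\<Union>(q, a, g, R, q') \<in> trans A. (\<lambda>(c, r, n). n) ` set g))"

lemma guard_const_le_max_const:
  assumes "wf_enta A" "(q, a, g, R, q') \<in> trans A" "(c, r, n) \<in> set g"
  shows "n \<le> max_const A"
proof -
  have "finite (\<Union>(q, a, g, R, q') \<in> trans A. (\<lambda>(c, r, n). n) ` set g)"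
    using assms(1) unfolding wf_enta_def by auto
  moreover have "n \<in> (\<Union>(q, a, g, R, q') \<in> trans A. (\<lambda>(c, r, n). n) ` set g)"
    using assms(2,3) by force
  ultimately show ?thesis
    unfolding max_const_def by simp
qed

definition clock_equiv :: "('q,'a,'c) enta \<Rightarrow> ('c \<Rightarrow> real) \<Rightarrow> ('c \<Rightarrow> real) \<Rightarrow> bool" where
  "clock_equiv A v v' \<longleftrightarrow>
     (\<forall>c \<in> clocks A. v c = v' c \<or> (real (max_const A) < v c \<and> real (max_const A) < v' c))"

lemma clock_equiv_delay:
  "clock_equiv A v v' \<Longrightarrow> e \<ge> 0 \<Longrightarrow> clock_equiv A (\<lambda>c. v c + e) (\<lambda>c. v' c + e)"
  unfolding clock_equiv_def by force

lemma clock_equiv_reset: "clock_equiv A v v' \<Longrightarrow> clock_equiv A (reset v R) (reset v' R)"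
  unfolding clock_equiv_def reset_def by auto

lemma cmp_sat_above_const:
  "real M < x \<Longrightarrow> real M < y \<Longrightarrow> n \<le> M \<Longrightarrow> cmp_sat r x (real n) = cmp_sat r y (real n)"
  by (cases r) auto

lemma guard_sat_clock_equiv:
  assumes "wf_enta A" "(q, a, g, R, q') \<in> trans A" "clock_equiv A v v'" "guard_sat v g"
  shows "guard_sat v' g"
  unfolding guard_sat_def
proof clarify
  fix c r n
  assume c: "(c, r, n) \<in> set g"
  have "c \<in> clocks A"
    using assms(1,2) c unfolding wf_enta_def by fastforce
  then have "v c = v' c \<or> real (max_const A) < v c \<and> real (max_const A) < v' c"
    using assms(3) unfolding clock_equiv_def by blast
  moreover have "cmp_sat r (v c) (real n)"
    using assms(4) c unfolding guard_sat_def by fastforce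
  ultimately show "cmp_sat r (v' c) (real n)"
    using cmp_sat_above_const guard_const_le_max_const[OF assms(1,2) c] by metis
qed

lemma run_from_clock_equiv:
  assumes "wf_enta A" "run_from A q v \<rho>" "clock_equiv A v v'"
  shows "run_from A q v' \<rho> \<and> fst (run_end q v' \<rho>) = fst (run_end q v \<rho>) \<and>
    clock_equiv A (snd (run_end q v \<rho>)) (snd (run_end q v' \<rho>))"
  using assms(2,3,1)
proof (induction A q v \<rho> arbitrary: v' rule: run_from.induct)
  case (2 A' q v d p a g R p' rest)
  then have tr: "(p, a, g, R, p') \<in> trans A'" and "d \<ge> 0" "p = q" "guard_sat (\<lambda>c. v c + d) g"
    and rest: "run_from A' p' (reset (\<lambda>c. v c + d) R) rest"
    by auto
  have equiv: "clock_equiv A' (\<lambda>c. v c + d) (\<lambda>c. v' c + d)"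
    using clock_equiv_delay[OF "2.prems"(2) \<open>d \<ge> 0\<close>] .
  have "guard_sat (\<lambda>c. v' c + d) g"
    by (rule guard_sat_clock_equiv[OF _ tr equiv]) (use "2.prems"(3) \<open>guard_sat _ g\<close> in auto)
  then show ?case
    using "2.IH"[OF rest clock_equiv_reset[OF equiv] "2.prems"(3)] tr \<open>d \<ge> 0\<close> \<open>p = q\<close>
    by simp
qed simp

lemma reaches_clock_equiv:
  assumes "wf_enta A" "reaches A q v t q' w" "clock_equiv A v v'"
  obtains w' where "reaches A q v' t q' w'" "clock_equiv A w w'"
proof -
  obtain \<rho> e where "run_from A q v \<rho>" "e \<ge> 0" "duration \<rho> + e = t"
    "config_after q v \<rho> e = (q', w)"
    using assms(2) unfolding reaches_def by blast
  with run_from_clock_equiv[OF assms(1) _ assms(3)] show ?thesis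
    by (intro that[of "snd (config_after q v' \<rho> e)"])
      (auto simp: reaches_def config_after_def intro: clock_equiv_delay)
qed

section \<open>Time warps\<close>

definition time_warp :: "(real \<Rightarrow> real) \<Rightarrow> bool" where
  "time_warp f \<longleftrightarrow> strict_mono f \<and> f 0 = 0 \<and> (\<forall>x. f (x + 1) = f x + 1)"

lemma time_warp_add_nat:
  assumes "time_warp f"
  shows "f (x + real n) = f x + real n"
proof (induction n)
  case (Suc n)
  have "f (x + real (Suc n)) = f (x + real n + 1)"
    by (simp add: algebra_simps)
  also have "\<dots> = f (x + real n) + 1"
    using assms unfolding time_warp_def by blast
  finally show ?case
    using Suc by simp
qed simp

lemma time_warp_add_int:
  assumes "time_warp f"
  shows "f (x + of_int k) = f x + of_int k"
proof (cases "k \<ge> 0")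
  case True
  then show ?thesis
    using time_warp_add_nat[OF assms, of x "nat k"] by simp
next
  case False
  have "f (x + of_int k + real (nat (- k))) = f (x + of_int k) + real (nat (- k))"
    by (rule time_warp_add_nat[OF assms])
  with False show ?thesis
    by simp
qed

lemma time_warp_of_int: "time_warp f \<Longrightarrow> f (of_int k) = of_int k"
  using time_warp_add_int[of f 0 k] by (simp add: time_warp_def)

lemma time_warp_reflect:
  assumes "time_warp f"
  shows "time_warp (\<lambda>x. - f (- x))"
proof -
  have "strict_mono f" "f 0 = 0"
    using assms unfolding time_warp_def by auto
  moreover have "f (- x - 1) = f (- x) - 1" for x
    using time_warp_add_int[OF assms, of "- x" "- 1"] by simp
  ultimately show ?thesis
    unfolding time_warp_def strict_mono_def by auto
qed

lemma cmp_sat_time_warp: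
  assumes "time_warp f"
  shows "cmp_sat r (a - b) (real n) \<longleftrightarrow> cmp_sat r (f a - f b) (real n)"
proof -
  have mono: "strict_mono f"
    using assms unfolding time_warp_def by blast
  have "f (b + real n) = f b + real n"
    by (rule time_warp_add_nat[OF assms])
  moreover have "a < b + real n \<longleftrightarrow> f a < f (b + real n)"
    "b + real n < a \<longleftrightarrow> f (b + real n) < f a" "a = b + real n \<longleftrightarrow> f a = f (b + real n)"
    using mono by (simp_all add: strict_mono_less strict_mono_eq)
  ultimately show ?thesis
    by (cases r) (auto simp: algebra_simps not_less[symmetric])
qed

fun warp_run :: "(real \<Rightarrow> real) \<Rightarrow> real \<Rightarrow> (real \<times> ('q,'a,'c) transition) list \<Rightarrow>
    (real \<times> ('q,'a,'c) transition) list"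
where
  "warp_run f T [] = []"
| "warp_run f T ((d, \<tau>) # rest) = (f (T + d) - f T, \<tau>) # warp_run f (T + d) rest"

lemma duration_warp_run: "duration (warp_run f T \<rho>) = f (T + duration \<rho>) - f T"
  by (induction f T \<rho> rule: warp_run.induct) (simp_all add: add.assoc)

text \<open>
  At time T a clock c with value v c was last reset at time T - v c. Warping moves every reset
  time by f, which gives the valuation below.
\<close>

lemma run_from_warp_run:
  assumes "time_warp f" "run_from A q v \<rho>"
  shows "run_from A q (\<lambda>c. f T - f (T - v c)) (warp_run f T \<rho>) \<and>
    run_end q (\<lambda>c. f T - f (T - v c)) (warp_run f T \<rho>) =
      (fst (run_end q v \<rho>),
       \<lambda>c. f (T + duration \<rho>) - f (T + duration \<rho> - snd (run_end q v \<rho>) c))"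
  using assms(2)
proof (induction \<rho> arbitrary: q v T)
  case (Cons x rest)
  obtain d p a g R p' where x: "x = (d, (p, a, g, R, p'))"
    by (cases x) auto
  have step: "d \<ge> 0" "(p, a, g, R, p') \<in> trans A" "p = q" "guard_sat (\<lambda>c. v c + d) g"
    "run_from A p' (reset (\<lambda>c. v c + d) R) rest"
    using Cons.prems x by auto
  have "f T \<le> f (T + d)"
    using assms(1) step(1) unfolding time_warp_def by (simp add: strict_mono_less_eq)
  moreover have "guard_sat (\<lambda>c. f T - f (T - v c) + (f (T + d) - f T)) g"
    using step(4) cmp_sat_time_warp[OF assms(1), of _ "T + d" "T - v _"]
    unfolding guard_sat_def by (fastforce simp: add.commute)
  moreover have "reset (\<lambda>c. f T - f (T - v c) + (f (T + d) - f T)) R =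
      (\<lambda>c. f (T + d) - f (T + d - reset (\<lambda>c. v c + d) R c))"
    by (auto simp: reset_def)
  ultimately show ?case
    using Cons.IH[OF step(5), of "T + d"] step(1-3) x by (simp add: add.assoc)
qed simp

lemma reachable_at_warp:
  assumes "time_warp f" "reachable_at A t q w"
  shows "reachable_at A (f t) q (\<lambda>c. f t - f (t - w c))"
proof -
  obtain \<rho> e where \<rho>: "run_from A (init A) (\<lambda>_. 0) \<rho>" "e \<ge> 0" "duration \<rho> + e = t"
    "config_after (init A) (\<lambda>_. 0) \<rho> e = (q, w)"
    using assms(2) unfolding reaches_def by blast
  let ?\<rho>' = "warp_run f 0 \<rho>" and ?e' = "f t - f (duration \<rho>)"
  have "run_from A (init A) (\<lambda>_. 0) ?\<rho>'"
    "run_end (init A) (\<lambda>_. 0) ?\<rho>' =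
      (q, \<lambda>c. f (duration \<rho>) - f (duration \<rho> - snd (run_end (init A) (\<lambda>_. 0) \<rho>) c))"
    using run_from_warp_run[OF assms(1) \<rho>(1), of 0] \<rho>(4) by (auto simp: config_after_def)
  moreover have "?e' \<ge> 0" "duration ?\<rho>' + ?e' = f t"
    using assms(1) \<rho>(2,3) by (auto simp: duration_warp_run time_warp_def strict_mono_less_eq)
  moreover have "w = (\<lambda>c. snd (run_end (init A) (\<lambda>_. 0) \<rho>) c + e)"
    using \<rho>(4) by (auto simp: config_after_def)
  ultimately show ?thesis
    unfolding reaches_def config_after_def using \<rho>(3)
    by (intro exI[of _ ?\<rho>'] exI[of _ ?e']) (auto simp: algebra_simps)
qed

lemma reachable_at_int_warp:
  assumes "time_warp g" "reachable_at A (of_int m) q w"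
  shows "reachable_at A (of_int m) q (\<lambda>c. g (w c))"
proof -
  \<comment> \<open>The reflected warp fixes m and sends the last reset time m - w c to m - g (w c).\<close>
  let ?f = "\<lambda>x. - g (- x)"
  have "?f (of_int m) = of_int m" "?f (of_int m) - ?f (of_int m - w c) = g (w c)" for c
    using time_warp_of_int[OF assms(1), of "- m"] time_warp_add_int[OF assms(1), of "w c" "- m"]
    by simp_all
  with reachable_at_warp[OF time_warp_reflect[OF assms(1)] assms(2)] show ?thesis
    by simp
qed

lemma strict_mono_on_interpolation:
  fixes \<phi> :: "real \<Rightarrow> real"
  assumes "finite A" "A \<noteq> {}" "strict_mono_on A \<phi>"
  shows "\<exists>h. strict_mono_on {Min A..Max A} h \<and> (\<forall>a\<in>A. h a = \<phi> a)"
  using assms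
proof (induction A rule: finite_linorder_max_induct)
  case (insert b A)
  show ?case
  proof (cases "A = {}")
    case True
    then show ?thesis
      by (intro exI[of _ \<phi>]) (auto intro: strict_mono_onI)
  next
    case False
    define m where "m = Max A"
    have m: "m \<in> A" "m < b" "\<forall>a\<in>A. a \<le> m"
      using insert.hyps False unfolding m_def by auto
    have "strict_mono_on A \<phi>"
      using insert.prems(2) by (rule monotone_on_subset) auto
    then obtain h where h: "strict_mono_on {Min A..m} h" "\<forall>a\<in>A. h a = \<phi> a"
      using insert.IH False unfolding m_def by blast
    define s where "s = (\<phi> b - \<phi> m) / (b - m)"
    have "\<phi> m < \<phi> b"
      using insert.prems(2) m by (auto dest: strict_mono_onD)
    then have s: "s > 0" "\<phi> m + s * (b - m) = \<phi> b"
      using m(2) unfolding s_def by auto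
    define h' where "h' x = (if x \<le> m then h x else \<phi> m + s * (x - m))" for x
    have "Min A \<le> m"
      using insert.hyps(1) m(1) by simp
    then have bounds: "Min (insert b A) = Min A" "Max (insert b A) = b" "Min A \<le> m"
      using insert.hyps(1) False m(2) unfolding m_def by auto
    have "h' x < h' y" if "x \<in> {Min A..b}" "y \<in> {Min A..b}" "x < y" for x y
    proof -
      consider "y \<le> m" | "x \<le> m" "m < y" | "m < x"
        by linarith
      then show ?thesis
      proof cases
        case 1
        then show ?thesis
          using strict_mono_onD[OF h(1), of x y] that unfolding h'_def by auto
      next
        case 2
        then have "h x \<le> h m"
          using strict_mono_on_leD[OF h(1), of x m] that bounds(3) by auto
        moreover have "0 < s * (y - m)"
          using 2 s(1) by simp
        ultimately show ?thesis
          using 2 h(2) m(1) unfolding h'_def by auto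
      next
        case 3
        then show ?thesis
          using that s(1) unfolding h'_def by auto
      qed
    qed
    moreover have "\<forall>a\<in>insert b A. h' a = \<phi> a"
      using h(2) m s(2) unfolding h'_def by auto
    ultimately show ?thesis
      unfolding bounds by (intro exI[of _ h'] conjI strict_mono_onI) auto
  qed
qed simp

lemma time_warp_periodic_extension:
  assumes "strict_mono_on {0..1} h" "h 0 = 0" "h 1 = 1"
  shows "time_warp (\<lambda>x. of_int \<lfloor>x\<rfloor> + h (frac x))"
proof -
  have range: "0 \<le> h (frac x) \<and> h (frac x) < 1" for x
    using strict_mono_on_leD[OF assms(1), of 0 "frac x"] strict_mono_onD[OF assms(1), of "frac x" 1]
      assms(2,3)
    by (auto simp: frac_lt_1 less_imp_le)
  have "of_int \<lfloor>x\<rfloor> + h (frac x) < of_int \<lfloor>y\<rfloor> + h (frac y)" if "x < y" for x y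
  proof (cases "\<lfloor>x\<rfloor> = \<lfloor>y\<rfloor>")
    case True
    then have "frac x < frac y"
      using that unfolding frac_def by simp
    then show ?thesis
      using True strict_mono_onD[OF assms(1), of "frac x" "frac y"]
      by (simp add: frac_lt_1 less_imp_le)
  next
    case False
    then have "\<lfloor>x\<rfloor> + 1 \<le> \<lfloor>y\<rfloor>"
      using floor_mono[of x y] that by simp
    then show ?thesis
      using range[of x] range[of y] by linarith
  qed
  then show ?thesis
    unfolding time_warp_def strict_mono_def using assms(2) by (simp add: frac_def)
qed

lemma time_warp_exists:
  fixes \<alpha> \<beta> :: "'c \<Rightarrow> real"
  assumes "finite C" "\<forall>c\<in>C. \<alpha> c \<in> {0..<1} \<and> \<beta> c \<in> {0..<1}"
    "\<forall>c\<in>C. \<forall>d\<in>C. \<alpha> c \<le> \<alpha> d \<longleftrightarrow> \<beta> c \<le> \<beta> d" "\<forall>c\<in>C. \<alpha> c = 0 \<longleftrightarrow> \<beta> c = 0"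
  shows "\<exists>g. time_warp g \<and> (\<forall>c\<in>C. g (\<alpha> c) = \<beta> c)"
proof -
  define A where "A = insert 0 (insert 1 (\<alpha> ` C))"
  define \<phi> where "\<phi> x = (if x \<in> \<alpha> ` C then \<beta> (SOME c. c \<in> C \<and> \<alpha> c = x) else x)" for x
  have \<phi>_\<alpha>: "\<phi> (\<alpha> c) = \<beta> c" if "c \<in> C" for c
  proof -
    define d where "d = (SOME d. d \<in> C \<and> \<alpha> d = \<alpha> c)"
    have d: "d \<in> C" "\<alpha> d = \<alpha> c"
      using someI[of "\<lambda>d. d \<in> C \<and> \<alpha> d = \<alpha> c"] that unfolding d_def by blast+
    then have "\<beta> d = \<beta> c"
      using assms(3) that by (simp add: order.eq_iff)
    then show ?thesis
      using that unfolding \<phi>_def d_def[symmetric] by simp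
  qed
  have \<phi>_0: "\<phi> 0 = 0" and \<phi>_1: "\<phi> 1 = 1"
    using assms(2,4) \<phi>_\<alpha> unfolding \<phi>_def by force+
  have "x \<le> y \<longleftrightarrow> \<phi> x \<le> \<phi> y" if "x \<in> A" "y \<in> A" for x y
    using that assms(2-4) \<phi>_\<alpha> \<phi>_0 \<phi>_1 unfolding A_def by (auto simp: less_le_not_le)
  then have "strict_mono_on A \<phi>"
    by (auto intro!: strict_mono_onI simp: less_le_not_le)
  moreover have "finite A" "A \<noteq> {}"
    using assms(1) unfolding A_def by auto
  moreover have "Min A = 0"
    by (rule Min_eqI) (use \<open>finite A\<close> assms(2) in \<open>auto simp: A_def\<close>)
  moreover have "Max A = 1"
    by (rule Max_eqI) (use \<open>finite A\<close> assms(2) in \<open>auto simp: A_def less_imp_le\<close>)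
  ultimately obtain h where h: "strict_mono_on {0..1} h" "\<forall>a\<in>A. h a = \<phi> a"
    using strict_mono_on_interpolation[of A \<phi>] by auto
  then have "h 0 = 0" "h 1 = 1"
    using \<phi>_0 \<phi>_1 unfolding A_def by auto
  moreover have "of_int \<lfloor>\<alpha> c\<rfloor> + h (frac (\<alpha> c)) = \<beta> c" if "c \<in> C" for c
    using that h(2) \<phi>_\<alpha> assms(2) unfolding A_def by (auto simp: floor_eq_iff frac_eq)
  ultimately show ?thesis
    using time_warp_periodic_extension[OF h(1)] by blast
qed

section \<open>Regions\<close>

type_synonym ('q, 'c) region = "'q \<times> ('c \<Rightarrow> int option) \<times> ('c \<times> 'c) set \<times> 'c set"

definition region_of :: "('q,'a,'c) enta \<Rightarrow> 'q \<Rightarrow> ('c \<Rightarrow> real) \<Rightarrow> ('q, 'c) region" where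
  "region_of A q v =
    (q, \<lambda>c. if c \<in> clocks A \<and> v c \<le> max_const A then Some \<lfloor>v c\<rfloor> else None,
     {(c, d). c \<in> clocks A \<and> d \<in> clocks A \<and> v c \<le> max_const A \<and> v d \<le> max_const A \<and>
        frac (v c) \<le> frac (v d)},
     {c. c \<in> clocks A \<and> v c \<le> max_const A \<and> frac (v c) = 0})"

lemma region_of_clock_equiv:
  assumes "clock_equiv A v v'"
  shows "region_of A q v = region_of A q v'"
proof -
  have "c \<in> clocks A \<Longrightarrow> v c \<le> max_const A \<longleftrightarrow> v' c \<le> max_const A"
    and "c \<in> clocks A \<Longrightarrow> v c \<le> max_const A \<Longrightarrow> v c = v' c" for c
    using assms unfolding clock_equiv_def by force+
  then show ?thesis
    unfolding region_of_def by (auto intro!: ext)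
qed

lemma region_of_eq_active:
  assumes "region_of A q v = region_of A q' v'" "c \<in> clocks A"
  shows "v c \<le> max_const A \<longleftrightarrow> v' c \<le> max_const A"
    and "v c \<le> max_const A \<Longrightarrow> \<lfloor>v c\<rfloor> = \<lfloor>v' c\<rfloor>"
proof -
  have "(if v c \<le> max_const A then Some \<lfloor>v c\<rfloor> else None) =
      (if v' c \<le> max_const A then Some \<lfloor>v' c\<rfloor> else None)"
    using fun_cong[OF arg_cong[OF assms(1), of "\<lambda>r. fst (snd r)"], of c] assms(2)
    by (simp add: region_of_def)
  then show "v c \<le> max_const A \<longleftrightarrow> v' c \<le> max_const A" "v c \<le> max_const A \<Longrightarrow> \<lfloor>v c\<rfloor> = \<lfloor>v' c\<rfloor>"
    by (auto split: if_splits)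
qed

lemma region_of_eq_frac_zero:
  assumes "region_of A q v = region_of A q' v'" "c \<in> clocks A" "v c \<le> max_const A"
  shows "frac (v c) = 0 \<longleftrightarrow> frac (v' c) = 0"
proof -
  have "v' c \<le> max_const A"
    using region_of_eq_active(1)[OF assms(1,2)] assms(3) by simp
  then show ?thesis
    using arg_cong[OF assms(1), of "\<lambda>r. c \<in> snd (snd (snd r))"] assms(2,3)
    by (simp add: region_of_def)
qed

lemma region_of_eq_frac_le:
  assumes "region_of A q v = region_of A q' v'" "c \<in> clocks A" "d \<in> clocks A"
    "v c \<le> max_const A" "v d \<le> max_const A"
  shows "frac (v c) \<le> frac (v d) \<longleftrightarrow> frac (v' c) \<le> frac (v' d)"
proof -
  have "v' c \<le> max_const A" "v' d \<le> max_const A"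
    using region_of_eq_active(1)[OF assms(1)] assms(2-5) by auto
  then show ?thesis
    using arg_cong[OF assms(1), of "\<lambda>r. (c, d) \<in> fst (snd (snd r))"] assms(2-5)
    by (simp add: region_of_def)
qed

lemma reachable_at_region_transfer:
  assumes "wf_enta A" "reachable_at A (of_int m) q v'" "region_of A q v = region_of A q v'"
  obtains w where "reachable_at A (of_int m) q w" "clock_equiv A v w"
proof -
  let ?M = "real (max_const A)"
  define C where "C = {c \<in> clocks A. v c \<le> ?M}"
  have "finite C"
    using assms(1) unfolding C_def wf_enta_def by simp
  moreover have "\<forall>c\<in>C. frac (v' c) \<in> {0..<1} \<and> frac (v c) \<in> {0..<1}"
    by (simp add: frac_lt_1)
  moreover have "\<forall>c\<in>C. \<forall>d\<in>C. frac (v' c) \<le> frac (v' d) \<longleftrightarrow> frac (v c) \<le> frac (v d)"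
    "\<forall>c\<in>C. frac (v' c) = 0 \<longleftrightarrow> frac (v c) = 0"
    using region_of_eq_frac_zero[OF assms(3)] region_of_eq_frac_le[OF assms(3)]
    unfolding C_def by auto
  ultimately obtain g where g: "time_warp g" "\<forall>c\<in>C. g (frac (v' c)) = frac (v c)"
    using time_warp_exists[of C "\<lambda>c. frac (v' c)" "\<lambda>c. frac (v c)"] by blast
  have "clock_equiv A v (\<lambda>c. g (v' c))"
    unfolding clock_equiv_def
  proof
    fix c
    assume c: "c \<in> clocks A"
    show "v c = g (v' c) \<or> ?M < v c \<and> ?M < g (v' c)"
    proof (cases "v c \<le> ?M")
      case True
      have "g (v' c) = g (frac (v' c) + of_int \<lfloor>v' c\<rfloor>)"
        by (simp add: frac_def)
      also have "\<dots> = frac (v c) + of_int \<lfloor>v c\<rfloor>"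
        using time_warp_add_int[OF g(1)] g(2) region_of_eq_active(2)[OF assms(3) c True] c True
        unfolding C_def by simp
      finally show ?thesis
        by (simp add: frac_def)
    next
      case False
      then have "?M < v' c"
        using region_of_eq_active(1)[OF assms(3) c] by simp
      then have "g ?M < g (v' c)"
        using g(1) unfolding time_warp_def by (simp add: strict_mono_less)
      moreover have "g ?M = ?M"
        using time_warp_of_int[OF g(1), of "int (max_const A)"] by simp
      ultimately show ?thesis
        using False by simp
    qed
  qed
  with reachable_at_int_warp[OF g(1) assms(2)] show thesis
    by (rule that)
qed

lemma run_from_invariant:
  assumes "wf_enta A" "run_from A q v \<rho>" "q \<in> locs A" "\<forall>c. v c \<ge> 0"
  shows "fst (run_end q v \<rho>) \<in> locs A \<and> (\<forall>c. snd (run_end q v \<rho>) c \<ge> 0)"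
  using assms(2-4,1)
proof (induction A q v \<rho> rule: run_from.induct)
  case (2 A q v d p a g R p' rest)
  then have "(p, a, g, R, p') \<in> trans A" "d \<ge> 0" "wf_enta A"
    by auto
  then have "p' \<in> locs A" "\<forall>c. reset (\<lambda>c. v c + d) R c \<ge> 0"
    using "2.prems"(3) unfolding wf_enta_def reset_def by fastforce+
  with 2 show ?case
    by simp
qed simp

lemma reachable_at_invariant:
  assumes "wf_enta A" "reachable_at A t q v"
  shows "q \<in> locs A" "\<forall>c. v c \<ge> 0"
proof -
  obtain \<rho> e where \<rho>: "run_from A (init A) (\<lambda>_. 0) \<rho>" "e \<ge> 0"
    "config_after (init A) (\<lambda>_. 0) \<rho> e = (q, v)"
    using assms(2) unfolding reaches_def by blast
  moreover have "init A \<in> locs A"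
    using assms(1) unfolding wf_enta_def by simp
  ultimately have "fst (run_end (init A) (\<lambda>_. 0) \<rho>) \<in> locs A"
    "\<forall>c. snd (run_end (init A) (\<lambda>_. 0) \<rho>) c \<ge> 0"
    using run_from_invariant[OF assms(1) \<rho>(1)] by simp_all
  with \<rho>(2,3) show "q \<in> locs A" "\<forall>c. v c \<ge> 0"
    unfolding config_after_def by auto
qed

definition region_space :: "('q,'a,'c) enta \<Rightarrow> ('q, 'c) region set" where
  "region_space A = locs A \<times>
     {f. \<forall>c. (c \<in> clocks A \<longrightarrow> f c \<in> insert None (Some ` {0..int (max_const A)})) \<and>
       (c \<notin> clocks A \<longrightarrow> f c = None)} \<times>
     Pow (clocks A \<times> clocks A) \<times> Pow (clocks A)"

lemma finite_region_space: "wf_enta A \<Longrightarrow> finite (region_space A)"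
  unfolding region_space_def wf_enta_def
  by (intro finite_cartesian_product finite_set_of_finite_funs) auto

lemma region_of_in_space:
  assumes "q \<in> locs A" "\<forall>c. v c \<ge> 0"
  shows "region_of A q v \<in> region_space A"
proof -
  have "\<lfloor>v c\<rfloor> \<in> {0..int (max_const A)}" if "v c \<le> max_const A" for c
    using that assms(2) by (auto simp: le_floor_iff floor_le_iff)
  then show ?thesis
    unfolding region_of_def region_space_def using assms(1) by auto
qed

definition reachable_regions :: "('q,'a,'c) enta \<Rightarrow> nat \<Rightarrow> ('q, 'c) region set" where
  "reachable_regions A n = {region_of A q v | q v. reachable_at A (real n) q v}"

definition region_successors :: "('q,'a,'c) enta \<Rightarrow> ('q, 'c) region set \<Rightarrow> ('q, 'c) region set" where
  "region_successors A S =
    {region_of A q' v' | q' v'. \<exists>q v. region_of A q v \<in> S \<and> reaches A q v 1 q' v'}"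

lemma finite_range_reachable_regions:
  assumes "wf_enta A"
  shows "finite (range (reachable_regions A))"
proof -
  have "reachable_regions A n \<subseteq> region_space A" for n
  proof
    fix r
    assume "r \<in> reachable_regions A n"
    then obtain q v where r: "r = region_of A q v" "reachable_at A (real n) q v"
      unfolding reachable_regions_def by blast
    then show "r \<in> region_space A"
      using region_of_in_space[OF reachable_at_invariant[OF assms r(2)]] by simp
  qed
  then have "range (reachable_regions A) \<subseteq> Pow (region_space A)"
    by auto
  then show ?thesis
    using finite_region_space[OF assms] by (meson finite_Pow_iff finite_subset)
qed

lemma reachable_regions_Suc:
  assumes "wf_enta A"
  shows "reachable_regions A (Suc n) = region_successors A (reachable_regions A n)"
proof (intro equalityI subsetI)
  fix r
  assume "r \<in> reachable_regions A (Suc n)"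
  then obtain q' v' where r: "r = region_of A q' v'" "reachable_at A (real (Suc n)) q' v'"
    unfolding reachable_regions_def by blast
  then have "reachable_at A (real n + 1) q' v'"
    by (simp add: add.commute)
  then obtain q v where "reachable_at A (real n) q v" "reaches A q v 1 q' v'"
    by (rule reaches_split) auto
  then show "r \<in> region_successors A (reachable_regions A n)"
    unfolding region_successors_def reachable_regions_def using r(1) by blast
next
  fix r
  assume "r \<in> region_successors A (reachable_regions A n)"
  then obtain q v q' v' q\<^sub>0 v\<^sub>0 where r: "r = region_of A q' v'" "reaches A q v 1 q' v'"
    "reachable_at A (real n) q\<^sub>0 v\<^sub>0" "region_of A q v = region_of A q\<^sub>0 v\<^sub>0"
    unfolding region_successors_def reachable_regions_def by auto
  then have "q\<^sub>0 = q"
    unfolding region_of_def by simp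
  then obtain w where "reachable_at A (of_int (int n)) q w" "clock_equiv A v w"
    using reachable_at_region_transfer[OF assms, of "int n" q v\<^sub>0 v] r(3,4) by auto
  moreover obtain w' where "reaches A q w 1 q' w'" "clock_equiv A v' w'"
    using reaches_clock_equiv[OF assms r(2) \<open>clock_equiv A v w\<close>] by blast
  ultimately have "reachable_at A (real (Suc n)) q' w'"
    using reaches_trans[of A "init A" "\<lambda>_. 0" "real n" q w 1 q' w'] by (simp add: add.commute)
  moreover have "r = region_of A q' w'"
    using r(1) region_of_clock_equiv[OF \<open>clock_equiv A v' w'\<close>] by simp
  ultimately show "r \<in> reachable_regions A (Suc n)"
    unfolding reachable_regions_def by blast
qed

section \<open>Eventual periodicity and the shift of trace suffixes\<close>

lemma recurrence_eventually_periodic: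
  fixes f :: "nat \<Rightarrow> 'a"
  assumes "finite (range f)" "\<And>n. f (Suc n) = F (f n)"
  obtains a L where "L > 0"
    "\<And>n n'. a \<le> n \<Longrightarrow> a \<le> n' \<Longrightarrow> n mod L = n' mod L \<Longrightarrow> f n = f n'"
proof -
  obtain a b where ab: "a < b" "f a = f b"
  proof -
    have "\<not> inj f"
      using assms(1) finite_imageD[of f UNIV] by auto
    then obtain x y where "x \<noteq> y" "f x = f y"
      unfolding inj_def by blast
    then show thesis
      using that[of x y] that[of y x] by (cases "x < y") auto
  qed
  have shift: "f (a + j) = f (b + j)" for j
    by (induction j) (simp_all add: ab(2) assms(2))
  have period: "f (n + k * (b - a)) = f n" if "a \<le> n" for n k
  proof (induction k)
    case (Suc k)
    have "n + Suc k * (b - a) = b + (n + k * (b - a) - a)"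
      using that ab(1) by (simp add: add_diff_inverse_nat)
    then have "f (n + Suc k * (b - a)) = f (b + (n + k * (b - a) - a))"
      by (rule arg_cong)
    also have "\<dots> = f (n + k * (b - a))"
      using shift[of "n + k * (b - a) - a"] that by simp
    finally show ?case
      using Suc by simp
  qed simp
  have ordered: "f n = f n'"
    if n: "a \<le> n" "n \<le> n'" "n mod (b - a) = n' mod (b - a)" for n n'
  proof -
    obtain k where "n' - n = (b - a) * k"
      using n(2,3) mod_eq_dvd_iff_nat[of n n' "b - a"] by auto
    then have "n' = n + k * (b - a)"
      using n(2) by (simp add: mult.commute)
    then show ?thesis
      using period[OF n(1)] by simp
  qed
  show thesis
  proof (rule that)
    show "b - a > 0"
      using ab(1) by simp
    fix n n'
    assume "a \<le> n" "a \<le> n'" "n mod (b - a) = n' mod (b - a)"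
    then show "f n = f n'"
      using ordered[of n n'] ordered[of n' n] nat_le_linear[of n n'] by argo
  qed
qed

lemma lang_split_at:
  assumes "pre @ suf \<in> lang A" "suf \<noteq> []" "real n < fst (hd suf)"
  obtains q v \<rho> ys where "reachable_at A (real n) q v" "run_from A q v \<rho>"
    "observable (timed_trace (real n) \<rho>) = ys @ suf"
proof -
  obtain \<rho> where \<rho>: "run_from A (init A) (\<lambda>_. 0) \<rho>" "pre @ suf = observable (timed_trace 0 \<rho>)"
    using assms(1) unfolding lang_def is_run_def by blast
  define e where "e = max 0 (real n - duration \<rho>)"
  have "e \<ge> 0" "0 \<le> real n" "real n \<le> 0 + duration \<rho> + e"
    unfolding e_def by auto
  then show thesis
  proof (rule run_from_split[OF \<rho>(1)])
    fix \<rho>\<^sub>1 e\<^sub>1 q v \<rho>\<^sub>2 e\<^sub>2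
    assume split: "run_from A (init A) (\<lambda>_. 0) \<rho>\<^sub>1" "e\<^sub>1 \<ge> 0" "0 + duration \<rho>\<^sub>1 + e\<^sub>1 = real n"
      "config_after (init A) (\<lambda>_. 0) \<rho>\<^sub>1 e\<^sub>1 = (q, v)" "run_from A q v \<rho>\<^sub>2"
      "timed_trace 0 \<rho> = timed_trace 0 \<rho>\<^sub>1 @ timed_trace (real n) \<rho>\<^sub>2"
    define xs where "xs = observable (timed_trace 0 \<rho>\<^sub>1)"
    define ys where "ys = observable (timed_trace (real n) \<rho>\<^sub>2)"
    have early: "fst x \<le> real n" if "x \<in> set xs" for x
      using observable_timed_trace_le_end[OF split(1), of x 0] that split(2,3)
      unfolding xs_def by simp
    have "pre @ suf = xs @ ys"
      using \<rho>(2) split(6) unfolding xs_def ys_def by (simp add: observable_append)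
    then obtain us where "pre = xs @ us \<and> us @ suf = ys \<or> pre @ us = xs \<and> suf = us @ ys"
      by (auto simp: append_eq_append_conv2)
    moreover have "us = []" if "pre @ us = xs" "suf = us @ ys"
    proof (rule ccontr)
      assume "us \<noteq> []"
      then have "hd suf \<in> set xs"
        using that by auto
      then show False
        using early[of "hd suf"] assms(3) by simp
    qed
    ultimately obtain zs where "ys = zs @ suf"
      by (metis append_Nil)
    moreover have "reachable_at A (real n) q v"
      unfolding reaches_def using split(1-4) by auto
    ultimately show thesis
      using that split(5) unfolding ys_def by blast
  qed
qed

lemma lang_extend:
  assumes "reachable_at A t q v" "run_from A q v \<rho>"
  shows "\<exists>pre. pre @ observable (timed_trace t \<rho>) \<in> lang A"
proof -
  obtain \<rho>\<^sub>1 e\<^sub>1 where \<rho>\<^sub>1: "run_from A (init A) (\<lambda>_. 0) \<rho>\<^sub>1" "e\<^sub>1 \<ge> 0" "duration \<rho>\<^sub>1 + e\<^sub>1 = t"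
    "config_after (init A) (\<lambda>_. 0) \<rho>\<^sub>1 e\<^sub>1 = (q, v)"
    using assms(1) unfolding reaches_def by blast
  obtain \<rho>' where \<rho>': "run_from A (init A) (\<lambda>_. 0) \<rho>'"
    "timed_trace 0 \<rho>' = timed_trace 0 \<rho>\<^sub>1 @ timed_trace (0 + duration \<rho>\<^sub>1 + e\<^sub>1) \<rho>"
    by (rule run_from_join[OF \<rho>\<^sub>1(1,2,4) assms(2) order.refl, where T = 0]) auto
  have "observable (timed_trace 0 \<rho>') \<in> lang A"
    unfolding lang_def is_run_def using \<rho>'(1) by blast
  moreover have "observable (timed_trace 0 \<rho>') =
      observable (timed_trace 0 \<rho>\<^sub>1) @ observable (timed_trace t \<rho>)"
    using \<rho>'(2) \<rho>\<^sub>1(3) by (simp add: observable_append)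
  ultimately show ?thesis
    by auto
qed

lemma lang_shift_suffix_congruent:
  assumes "wf_enta A"
    and periodic: "\<And>n n'. a \<le> n \<Longrightarrow> a \<le> n' \<Longrightarrow> n mod L = n' mod L \<Longrightarrow>
      reachable_regions A n = reachable_regions A n'"
    and "pre @ suf \<in> lang A" "suf \<noteq> []" "real n < fst (hd suf)"
    and "a \<le> n" "a \<le> n'" "n mod L = n' mod L"
  shows "\<exists>pre'. pre' @ map (\<lambda>(t, b). (t + (real n' - real n), b)) suf \<in> lang A"
proof -
  let ?shift = "map (\<lambda>(t, b). (t + (real n' - real n), b))"
  obtain q v \<rho> ys where \<rho>: "reachable_at A (real n) q v" "run_from A q v \<rho>"
    "observable (timed_trace (real n) \<rho>) = ys @ suf"
    using lang_split_at[OF assms(3-5)] by blast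
  have "region_of A q v \<in> reachable_regions A n'"
    using periodic[OF assms(6-8)] \<rho>(1) unfolding reachable_regions_def by blast
  then obtain q\<^sub>0 v\<^sub>0 where
    "reachable_at A (real n') q\<^sub>0 v\<^sub>0" "region_of A q v = region_of A q\<^sub>0 v\<^sub>0"
    unfolding reachable_regions_def by auto
  moreover from this have "q\<^sub>0 = q"
    unfolding region_of_def by simp
  ultimately obtain w where w: "reachable_at A (of_int (int n')) q w" "clock_equiv A v w"
    using reachable_at_region_transfer[OF assms(1)] by (metis of_int_of_nat_eq)
  then have "run_from A q w \<rho>"
    using run_from_clock_equiv[OF assms(1) \<rho>(2)] by blast
  then obtain pre\<^sub>0 where "pre\<^sub>0 @ observable (timed_trace (real n') \<rho>) \<in> lang A"
    using lang_extend w(1) by fastforce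
  moreover have "observable (timed_trace (real n') \<rho>) = ?shift ys @ ?shift suf"
    using timed_trace_shift[of "real n" "real n' - real n" \<rho>] \<rho>(3) by (simp add: observable_shift)
  ultimately show ?thesis
    by (intro exI[of _ "pre\<^sub>0 @ ?shift ys"]) simp
qed

lemma lang_shift_suffix:
  assumes "wf_enta A"
    and periodic: "\<And>n n'. a \<le> n \<Longrightarrow> a \<le> n' \<Longrightarrow> n mod L = n' mod L \<Longrightarrow>
      reachable_regions A n = reachable_regions A n'"
    and "pre @ suf \<in> lang A" "suf \<noteq> []" "fst (hd suf) > real a + 1"
    and "K = of_int (k * int L)" "fst (hd suf) + K > real a + 1"
  shows "\<exists>pre'. pre' @ map (\<lambda>(t, b). (t + K, b)) suf \<in> lang A"
proof -
  \<comment> \<open>m is the last integer time strictly before the suffix starts.\<close>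
  define m where "m = \<lceil>fst (hd suf)\<rceil> - 1"
  have m: "of_int m < fst (hd suf)" "fst (hd suf) \<le> of_int m + 1"
    using ceiling_correct[of "fst (hd suf)"] unfolding m_def by linarith+
  then have "int a \<le> m" "int a \<le> m + k * int L"
    using assms(5-7) by linarith+
  define n n' where "n = nat m" and "n' = nat (m + k * int L)"
  have n: "int n = m" "int n' = int n + k * int L" "a \<le> n" "a \<le> n'"
    using \<open>int a \<le> m\<close> \<open>int a \<le> m + k * int L\<close> unfolding n_def n'_def by auto
  have "int (n mod L) = int (n' mod L)"
    unfolding of_nat_mod n(2) by simp
  then have "n mod L = n' mod L"
    by (simp only: of_nat_eq_iff)
  moreover have "real n = of_int m" "real n' - real n = K"
    unfolding assms(6) using n(1,2)
    by (metis of_int_of_nat_eq, metis of_int_of_nat_eq of_int_add add_diff_cancel_left')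
  ultimately show ?thesis
    using lang_shift_suffix_congruent[OF assms(1) periodic assms(3,4) _ n(3,4)] m(1) by simp
qed

theorem theorem2:
  fixes A :: "('q,'a,'c) enta"
  assumes "wf_enta A"
  shows "\<exists>t_per::real. t_per > 0 \<and> (\<exists>L::int. L > 0 \<and>
    (\<forall>pre suf K. pre @ suf \<in> lang A \<longrightarrow> suf \<noteq> [] \<longrightarrow> fst (hd suf) > t_per \<longrightarrow>
       (\<exists>k::int. K = real_of_int (k * L)) \<longrightarrow> fst (hd suf) + K > t_per \<longrightarrow>
       (\<exists>pre'. pre' @ map (\<lambda>(t, a). (t + K, a)) suf \<in> lang A)))"
proof -
  obtain a L where L: "L > 0"
    "\<And>n n'. a \<le> n \<Longrightarrow> a \<le> n' \<Longrightarrow> n mod L = n' mod L \<Longrightarrow>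
      reachable_regions A n = reachable_regions A n'"
    by (rule recurrence_eventually_periodic[OF finite_range_reachable_regions[OF assms]
          reachable_regions_Suc[OF assms]]) blast
  show ?thesis
  proof (intro exI[of _ "real a + 1"] exI[of _ "int L"] conjI allI impI)
    show "real a + 1 > 0" "int L > 0"
      using L(1) by simp_all
    fix pre suf K
    assume "pre @ suf \<in> lang A" "suf \<noteq> []" "fst (hd suf) > real a + 1"
      "\<exists>k. K = of_int (k * int L)" "fst (hd suf) + K > real a + 1"
    then show "\<exists>pre'. pre' @ map (\<lambda>(t, a). (t + K, a)) suf \<in> lang A"
      using lang_shift_suffix[OF assms L(2)] by blast
  qed
qed

end
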